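(* Under the standing assumptions below, for $j=1,\dots,p$ let $z^j=M-(M_j-m_j)e^j$, where $e^j$ is the $j$-th unit vector of $\mathbb{R}^p$. Suppose $(\bar x,\bar y)$ is an optimal solution of (BP) and there is an index $i$ with $f_i(\bar x)=m_i$. Then $$h(\bar x,\bar y)=\varphi(z^i)=\min\{\varphi(z^j)\mid j=1,\dots,p\},$$ and if $\bar z\in\{z^1,\dots,z^p\}$ attains this minimum, then every optimal solution of $MP(\bar z)$ is an optimal solution of (BP).
   Context: Standing assumptions: $X=\{x\in\mathbb{R}^n\mid s(x)\le 0\}$ is nonempty, bounded and convex, where $s:\mathbb{R}^n\to\mathbb{R}^q$ is continuously differentiable with quasiconvex components. $f=(f_1,\dots,f_p):\mathbb{R}^n\to\mathbb{R}^p$ is continuously differentiable with each $f_i$ pseudoconvex; $g:\mathbb{R}^n\times\mathbb{R}^m\to\mathbb{R}^\ell$ is continuously differentiable with quasiconvex components; $h:\mathbb{R}^n\times\mathbb{R}^m\to\mathbb{R}$ is continuous and pseudoconvex. For $a,b\in\mathbb{R}^p$, $a\le b$ means $a_i\le b_i$ for all $i$ and $a<b$ means $a_i<b_i$ for all $i$. $X_{WE}$ denotes the set of $x\in X$ such that there is no $x'\in X$ with $f(x')<f(x)$. Problem (BP): minimize $h(x,y)$ subject to $g(x,y)\le 0$, $y\in\mathbb{R}^m_+$, $x\in X_{WE}$. Let $\mathcal{G}=\{(x,y)\mid x\in X,\ y\in\mathbb{R}^m_+,\ g(x,y)\le 0\}$. Let $m\in\mathbb{R}^p$ be given by $m_i=\min\{f_i(x)\mid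 x\in X\}$, and let $M\in\mathbb{R}^p$ satisfy $f(x)\le M$ for all $x\in X$. For $z\in\mathbb{R}^p$ with $m\le z\le M$, $MP(z)$ is the problem $\min\{h(x,y)\mid (x,y)\in\mathcal{G},\ f(x)\le z\}$ and $\varphi(z)$ is its optimal value ($+\infty$ if infeasible). *)

theory Defs
  imports "HOL-Analysis.Analysis" "HOL-Library.Extended_Real"
begin

definition C1_fun :: "('a::real_normed_vector \<Rightarrow> 'b::real_normed_vector) \<Rightarrow> bool" where
  "C1_fun f \<longleftrightarrow> (\<exists>f'. (\<forall>x. (f has_derivative blinfun_apply (f' x)) (at x)) \<and> continuous_on UNIV f')"

definition quasiconvex_fun :: "('a::real_vector \<Rightarrow> real) \<Rightarrow> bool" where
  "quasiconvex_fun f \<longleftrightarrow>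
     (\<forall>x y u. 0 \<le> u \<and> u \<le> 1 \<longrightarrow> f (u *\<^sub>R x + (1 - u) *\<^sub>R y) \<le> max (f x) (f y))"

definition pseudoconvex_diff :: "('a::real_normed_vector \<Rightarrow> real) \<Rightarrow> bool" where
  "pseudoconvex_diff f \<longleftrightarrow> (\<forall>x. f differentiable (at x)) \<and>
     (\<forall>x y. f y < f x \<longrightarrow> frechet_derivative f (at x) (y - x) < 0)"

(* pseudoconvexity of a (possibly nondifferentiable) function via the upper Dini
   directional derivative (Diewert); coincides with the above for differentiable f *)
definition pseudoconvex_dini :: "('a::real_normed_vector \<Rightarrow> real) \<Rightarrow> bool" where
  "pseudoconvex_dini f \<longleftrightarrow>
     (\<forall>x y. f y < f x \<longrightarrow>
        Limsup (at_right 0) (\<lambda>t::real. ereal ((f (x + t *\<^sub>R (y - x)) - f x) / t)) < 0)"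

definition Xset :: "('q \<Rightarrow> 'x \<Rightarrow> real) \<Rightarrow> 'x set" where
  "Xset s = {x. \<forall>k. s k x \<le> 0}"

definition XWE :: "('q \<Rightarrow> 'x \<Rightarrow> real) \<Rightarrow> ('p \<Rightarrow> 'x \<Rightarrow> real) \<Rightarrow> 'x set" where
  "XWE s f = {x \<in> Xset s. \<not> (\<exists>x'\<in>Xset s. \<forall>i. f i x' < f i x)}"

definition Gset :: "('q \<Rightarrow> 'x \<Rightarrow> real) \<Rightarrow> ('l \<Rightarrow> ('x \<times> (real^'m)) \<Rightarrow> real) \<Rightarrow> ('x \<times> (real^'m)) set" where
  "Gset s g = {(x, y). x \<in> Xset s \<and> (\<forall>k. 0 \<le> y $ k) \<and> (\<forall>k. g k (x, y) \<le> 0)}"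

definition BP_feas :: "('q \<Rightarrow> 'x \<Rightarrow> real) \<Rightarrow> ('p \<Rightarrow> 'x \<Rightarrow> real) \<Rightarrow> ('l \<Rightarrow> ('x \<times> (real^'m)) \<Rightarrow> real)
     \<Rightarrow> ('x \<times> (real^'m)) set" where
  "BP_feas s f g = {(x, y). (\<forall>k. g k (x, y) \<le> 0) \<and> (\<forall>k. 0 \<le> y $ k) \<and> x \<in> XWE s f}"

definition BP_opt :: "('q \<Rightarrow> 'x \<Rightarrow> real) \<Rightarrow> ('p \<Rightarrow> 'x \<Rightarrow> real) \<Rightarrow> ('l \<Rightarrow> ('x \<times> (real^'m)) \<Rightarrow> real)
     \<Rightarrow> (('x \<times> (real^'m)) \<Rightarrow> real) \<Rightarrow> ('x \<times> (real^'m)) \<Rightarrow> bool" where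
  "BP_opt s f g h w \<longleftrightarrow> w \<in> BP_feas s f g \<and> (\<forall>w'\<in>BP_feas s f g. h w \<le> h w')"

definition mvec :: "('q \<Rightarrow> 'x \<Rightarrow> real) \<Rightarrow> ('p \<Rightarrow> 'x \<Rightarrow> real) \<Rightarrow> 'p \<Rightarrow> real" where
  "mvec s f i = Inf (f i ` Xset s)"

definition MP_feas :: "('q \<Rightarrow> 'x \<Rightarrow> real) \<Rightarrow> ('p \<Rightarrow> 'x \<Rightarrow> real) \<Rightarrow> ('l \<Rightarrow> ('x \<times> (real^'m)) \<Rightarrow> real)
     \<Rightarrow> ('p \<Rightarrow> real) \<Rightarrow> ('x \<times> (real^'m)) set" where
  "MP_feas s f g z = {(x, y). (x, y) \<in> Gset s g \<and> (\<forall>i. f i x \<le> z i)}"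

definition MP_opt :: "('q \<Rightarrow> 'x \<Rightarrow> real) \<Rightarrow> ('p \<Rightarrow> 'x \<Rightarrow> real) \<Rightarrow> ('l \<Rightarrow> ('x \<times> (real^'m)) \<Rightarrow> real)
     \<Rightarrow> (('x \<times> (real^'m)) \<Rightarrow> real) \<Rightarrow> ('p \<Rightarrow> real) \<Rightarrow> ('x \<times> (real^'m)) \<Rightarrow> bool" where
  "MP_opt s f g h z w \<longleftrightarrow> w \<in> MP_feas s f g z \<and> (\<forall>w'\<in>MP_feas s f g z. h w \<le> h w')"

(* optimal value phi(z) of MP(z); +infinity if infeasible *)
definition phi :: "('q \<Rightarrow> 'x \<Rightarrow> real) \<Rightarrow> ('p \<Rightarrow> 'x \<Rightarrow> real) \<Rightarrow> ('l \<Rightarrow> ('x \<times> (real^'m)) \<Rightarrow> real)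
     \<Rightarrow> (('x \<times> (real^'m)) \<Rightarrow> real) \<Rightarrow> ('p \<Rightarrow> real) \<Rightarrow> ereal" where
  "phi s f g h z = Inf ((\<lambda>w. ereal (h w)) ` MP_feas s f g z)"

definition zvec :: "('p \<Rightarrow> real) \<Rightarrow> ('p \<Rightarrow> real) \<Rightarrow> 'p \<Rightarrow> 'p \<Rightarrow> real" where
  "zvec M mm j = (\<lambda>i. M i - (M j - mm j) * (if i = j then 1 else 0))"

end

theory Submission
  imports Defs
begin

text \<open>
  Every point feasible for \<open>MP(z\<^sup>j)\<close> has \<open>f\<^sub>j(x) \<le> m\<^sub>j\<close>, hence \<open>f\<^sub>j(x) = m\<^sub>j\<close>; as no point of
  \<open>X\<close> can strictly decrease a minimised component, \<open>x\<close> is weakly efficient. So every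
  \<open>MP(z\<^sup>j)\<close> is a restriction of (BP) and \<open>h(x\<^sub>b, y\<^sub>b) \<le> \<phi>(z\<^sup>j)\<close> for all \<open>j\<close>. If moreover
  \<open>f\<^sub>i(x\<^sub>b) = m\<^sub>i\<close>, then \<open>(x\<^sub>b, y\<^sub>b)\<close> is feasible for \<open>MP(z\<^sup>i)\<close>, so equality holds for \<open>j = i\<close>.
\<close>

lemma Inf_image_le_if_continuous_bounded:
  fixes F :: "'a::heine_borel \<Rightarrow> real"
  assumes "continuous_on UNIV F" "bounded S" "x \<in> S"
  shows "Inf (F ` S) \<le> F x"
proof -
  have "compact (F ` closure S)"
    using assms(1,2) by (intro compact_continuous_image) (auto intro: continuous_on_subset)
  then have "bounded (F ` S)"
    by (meson bounded_subset closure_subset compact_imp_bounded image_mono)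
  then show ?thesis
    using assms(3) by (auto intro: cInf_lower bounded_imp_bdd_below)
qed

lemma mvec_le_on_Xset:
  fixes f :: "'p \<Rightarrow> 'a::{real_normed_vector,heine_borel} \<Rightarrow> real"
  assumes "pseudoconvex_diff (f j)" "bounded (Xset s)" "x \<in> Xset s"
  shows "mvec s f j \<le> f j x"
proof -
  have "continuous_on UNIV (f j)"
    using assms(1) unfolding pseudoconvex_diff_def
    by (simp add: continuous_at_imp_continuous_on differentiable_imp_continuous_within)
  then show ?thesis
    unfolding mvec_def using assms(2,3) by (rule Inf_image_le_if_continuous_bounded)
qed

lemma XWE_if_component_minimal:
  assumes "x \<in> Xset s" "\<And>x'. x' \<in> Xset s \<Longrightarrow> f j x \<le> f j x'"
  shows "x \<in> XWE s f"
  using assms unfolding XWE_def by (auto simp: not_less)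

lemma MP_feas_zvec_subset_BP_feas:
  assumes "\<And>x. x \<in> Xset s \<Longrightarrow> mvec s f j \<le> f j x"
  shows "MP_feas s f g (zvec M (mvec s f) j) \<subseteq> BP_feas s f g"
proof safe
  fix x y assume xy: "(x, y) \<in> MP_feas s f g (zvec M (mvec s f) j)"
  then have x: "x \<in> Xset s" and "f j x \<le> mvec s f j"
    by (auto simp: MP_feas_def Gset_def zvec_def dest: spec[of _ j])
  then have "x \<in> XWE s f"
    by (intro XWE_if_component_minimal[of _ _ _ j]) (auto intro: order_trans assms)
  then show "(x, y) \<in> BP_feas s f g"
    using xy by (auto simp: MP_feas_def Gset_def BP_feas_def)
qed

lemma BP_feas_in_MP_feas_zvec:
  assumes "(x, y) \<in> BP_feas s f g" "f i x = mvec s f i"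
    and "\<And>j. x \<in> Xset s \<Longrightarrow> f j x \<le> M j"
  shows "(x, y) \<in> MP_feas s f g (zvec M (mvec s f) i)"
  using assms by (auto simp: MP_feas_def Gset_def BP_feas_def XWE_def zvec_def)

lemma BP_opt_le_phi:
  assumes "BP_opt s f g h w" "MP_feas s f g z \<subseteq> BP_feas s f g"
  shows "ereal (h w) \<le> phi s f g h z"
  using assms unfolding BP_opt_def phi_def by (auto intro!: Inf_greatest)

lemma phi_le_of_MP_feas:
  assumes "w \<in> MP_feas s f g z"
  shows "phi s f g h z \<le> ereal (h w)"
  using assms unfolding phi_def by (auto intro: Inf_lower)

lemma phi_eq_if_MP_opt:
  assumes "MP_opt s f g h z w"
  shows "phi s f g h z = ereal (h w)"
  using assms unfolding MP_opt_def phi_def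
  by (intro antisym) (auto intro: Inf_lower Inf_greatest)

lemma BP_opt_if_MP_opt_same_value:
  assumes "BP_opt s f g h w\<^sub>0" "MP_feas s f g z \<subseteq> BP_feas s f g"
    and "MP_opt s f g h z w" "phi s f g h z = ereal (h w\<^sub>0)"
  shows "BP_opt s f g h w"
  using assms phi_eq_if_MP_opt[OF assms(3)]
  unfolding BP_opt_def MP_opt_def by auto

theorem lemma5p2:
  fixes s :: "'q::finite \<Rightarrow> real^'n \<Rightarrow> real"
    and f :: "'p::finite \<Rightarrow> real^'n \<Rightarrow> real"
    and g :: "'l::finite \<Rightarrow> ((real^'n) \<times> (real^'m)) \<Rightarrow> real"
    and h :: "((real^'n) \<times> (real^'m)) \<Rightarrow> real"
    and M :: "'p \<Rightarrow> real"
    and xb :: "real^'n" and yb :: "real^'m" and i :: 'p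
  assumes X_ne: "Xset s \<noteq> {}" and X_bdd: "bounded (Xset s)" and X_cvx: "convex (Xset s)"
    and s_C1: "\<And>k. C1_fun (s k)" and s_qc: "\<And>k. quasiconvex_fun (s k)"
    and f_C1: "\<And>j. C1_fun (f j)" and f_pc: "\<And>j. pseudoconvex_diff (f j)"
    and g_C1: "\<And>k. C1_fun (g k)" and g_qc: "\<And>k. quasiconvex_fun (g k)"
    and h_cont: "continuous_on UNIV h" and h_pc: "pseudoconvex_dini h"
    and M_ub: "\<And>x j. x \<in> Xset s \<Longrightarrow> f j x \<le> M j"
    and opt: "BP_opt s f g h (xb, yb)"
    and fi: "f i xb = mvec s f i"
  shows "ereal (h (xb, yb)) = phi s f g h (zvec M (mvec s f) i)
       \<and> phi s f g h (zvec M (mvec s f) i) = Min (range (\<lambda>j. phi s f g h (zvec M (mvec s f) j)))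
       \<and> (\<forall>zb \<in> range (zvec M (mvec s f)).
            phi s f g h zb = Min (range (\<lambda>j. phi s f g h (zvec M (mvec s f) j))) \<longrightarrow>
            (\<forall>w. MP_opt s f g h zb w \<longrightarrow> BP_opt s f g h w))"
proof -
  let ?\<phi> = "\<lambda>j. phi s f g h (zvec M (mvec s f) j)"
  have sub: "MP_feas s f g (zvec M (mvec s f) j) \<subseteq> BP_feas s f g" for j
    using mvec_le_on_Xset[OF f_pc X_bdd] by (rule MP_feas_zvec_subset_BP_feas)
  have lower: "ereal (h (xb, yb)) \<le> ?\<phi> j" for j
    using opt sub by (rule BP_opt_le_phi)
  have "(xb, yb) \<in> MP_feas s f g (zvec M (mvec s f) i)"
    using opt fi M_ub by (intro BP_feas_in_MP_feas_zvec) (auto simp: BP_opt_def)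
  then have opt_value: "ereal (h (xb, yb)) = ?\<phi> i"
    using lower[of i] by (auto intro: antisym phi_le_of_MP_feas)
  then have min: "?\<phi> i = Min (range ?\<phi>)"
    using lower by (intro Min_eqI[symmetric]) auto
  have "BP_opt s f g h w"
    if "phi s f g h (zvec M (mvec s f) j) = Min (range ?\<phi>)"
      "MP_opt s f g h (zvec M (mvec s f) j) w" for j w
    using opt sub that(2) by (rule BP_opt_if_MP_opt_same_value) (use that(1) opt_value min in auto)
  then show ?thesis
    using opt_value min by blast
qed

end
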